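(* Let $G=(V,E)$ be a chordal graph on a non-empty finite vertex set $V$, and let $\{A_v\}_{v\in V}$ be events in a probability space. Then for every integer $r\ge 1$, \[ \sum_{I\in\mathscr{C}(G)} (-1)^{|I|-1}\,\Pr\Big(\bigcap_{i\in I} A_i\Big) \;\ge\; \sum_{\substack{I\in\mathscr{C}(G)\\ |I|\le 2r}} (-1)^{|I|-1}\,\Pr\Big(\bigcap_{i\in I} A_i\Big). \]
   Context: A graph is chordal if it contains no cycle of length four or more as an induced subgraph. $\mathscr{C}(G)$ denotes the clique complex of $G$: the set of all non-empty subsets $I\subseteq V$ whose elements are pairwise adjacent in $G$. *)

theory Defs
  imports "HOL-Probability.Probability"
begin

definition simple_graph :: "'a set \<Rightarrow> ('a \<Rightarrow> 'a \<Rightarrow> bool) \<Rightarrow> bool" where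
  "simple_graph V E \<longleftrightarrow> finite V \<and> (\<forall>x y. E x y \<longrightarrow> x \<in> V \<and> y \<in> V)
     \<and> (\<forall>x y. E x y \<longrightarrow> E y x) \<and> (\<forall>x. \<not> E x x)"

definition induced_cycle :: "'a set \<Rightarrow> ('a \<Rightarrow> 'a \<Rightarrow> bool) \<Rightarrow> 'a list \<Rightarrow> bool" where
  "induced_cycle V E cs \<longleftrightarrow> length cs \<ge> 4 \<and> distinct cs \<and> set cs \<subseteq> V
     \<and> (\<forall>i < length cs. E (cs ! i) (cs ! ((i + 1) mod length cs)))
     \<and> (\<forall>i < length cs. \<forall>j < length cs. E (cs ! i) (cs ! j) \<longrightarrow>
          j = (i + 1) mod length cs \<or> i = (j + 1) mod length cs)"

definition chordal :: "'a set \<Rightarrow> ('a \<Rightarrow> 'a \<Rightarrow> bool) \<Rightarrow> bool" where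
  "chordal V E \<longleftrightarrow> \<not> (\<exists>cs. induced_cycle V E cs)"

definition clique_complex :: "'a set \<Rightarrow> ('a \<Rightarrow> 'a \<Rightarrow> bool) \<Rightarrow> 'a set set" where
  "clique_complex V E = {I. I \<subseteq> V \<and> I \<noteq> {} \<and> (\<forall>x\<in>I. \<forall>y\<in>I. x \<noteq> y \<longrightarrow> E x y)}"

end

theory Submission
  imports Defs
begin

(* Truncating the inclusion-exclusion sum over the clique complex of a chordal
   graph after the even level 2r never overestimates the full sum.  Subtracting the
   two sides, the claim is

     sum over cliques I with |I| > 2r of (-1)^(|I|-1) * P(A_I)  >=  0,

   and the left-hand side is the expectation of the random variable
   omega |-> (sum over cliques I of G[S_omega] with |I| > 2r of (-1)^(|I|-1)),
   where S_omega = {v. omega in A_v}.  Since induced subgraphs of chordal graphs are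
   chordal, it suffices to show that this signed count of large cliques is
   non-negative for every finite chordal graph.  This goes by deleting a simplicial
   vertex v (one exists by Dirac's lemma): the cliques through v are v + J for J a
   subset of the neighbourhood of v, and their contribution is an alternating tail
   sum over subsets of size >= 2r, which is non-negative. *)

section \<open>Walks and induced paths\<close>

definition walk :: "('a \<Rightarrow> 'a \<Rightarrow> bool) \<Rightarrow> 'a list \<Rightarrow> bool" where
  "walk E ps \<longleftrightarrow> (\<forall>i. Suc i < length ps \<longrightarrow> E (ps!i) (ps!Suc i))"

definition induced_path :: "('a \<Rightarrow> 'a \<Rightarrow> bool) \<Rightarrow> 'a list \<Rightarrow> bool" where
  "induced_path E qs \<longleftrightarrow> walk E qs \<and> distinct qs \<and>
     (\<forall>i<length qs. \<forall>j<length qs. E (qs!i) (qs!j) \<longrightarrow> j = Suc i \<or> i = Suc j)"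

lemma walk_take: "walk E ps \<Longrightarrow> walk E (take i ps)"
  unfolding walk_def by auto

lemma walk_drop: "walk E ps \<Longrightarrow> walk E (drop i ps)"
  unfolding walk_def by auto

lemma walk_append:
  assumes "walk E xs" "walk E ys" "xs \<noteq> [] \<Longrightarrow> ys \<noteq> [] \<Longrightarrow> E (last xs) (hd ys)"
  shows "walk E (xs @ ys)"
  unfolding walk_def
proof (intro allI impI)
  fix i assume i: "Suc i < length (xs @ ys)"
  consider "Suc i < length xs" | "Suc i = length xs" | "i \<ge> length xs" by linarith
  then show "E ((xs @ ys) ! i) ((xs @ ys) ! Suc i)"
  proof cases
    case 1 then show ?thesis using assms(1) by (simp add: walk_def nth_append)
  next
    case 2
    then have "xs \<noteq> []" "ys \<noteq> []" "i = length xs - 1" using i by auto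
    then show ?thesis using assms(3) 2 by (simp add: nth_append last_conv_nth hd_conv_nth)
  next
    case 3
    then have "Suc (i - length xs) < length ys" using i by simp
    then show ?thesis using assms(2) 3 unfolding walk_def
      by (auto simp add: nth_append Suc_diff_le)
  qed
qed

lemma walk_snoc: "walk E xs \<Longrightarrow> (xs \<noteq> [] \<Longrightarrow> E (last xs) y) \<Longrightarrow> walk E (xs @ [y])"
  by (rule walk_append) (auto simp: walk_def)

lemma walk_Cons: "walk E xs \<Longrightarrow> (xs \<noteq> [] \<Longrightarrow> E y (hd xs)) \<Longrightarrow> walk E (y # xs)"
  using walk_append[of E "[y]" xs] by (auto simp: walk_def)

lemma walk_splice:
  assumes w: "walk E ps" and kj: "0 < k" "k < j" "j < length ps"
    and e: "E (ps ! (k - 1)) (ps ! j)"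
  defines "ps' \<equiv> take k ps @ drop j ps"
  shows "walk E ps' \<and> ps' \<noteq> [] \<and> hd ps' = hd ps \<and> last ps' = last ps
    \<and> set ps' \<subseteq> set ps \<and> length ps' < length ps"
proof (intro conjI)
  have "last (take k ps) = ps ! (k - 1)" using kj by (subst last_conv_nth) auto
  then show "walk E ps'" unfolding ps'_def using e kj
    by (intro walk_append walk_take walk_drop w) (simp add: hd_drop_conv_nth)
  show "set ps' \<subseteq> set ps" unfolding ps'_def using set_take_subset set_drop_subset by fastforce
qed (use kj in \<open>auto simp: ps'_def hd_append neq_Nil_conv\<close>)

text \<open>A walk that is not an induced path can be shortened keeping its end points:
  either it repeats a vertex, or it has a chord between non-consecutive positions.\<close>
lemma walk_shortcut:
  assumes irr: "\<And>a. \<not> E a a" and sym: "\<And>a b. E a b \<Longrightarrow> E b a"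
    and w: "walk E ps" and ne: "ps \<noteq> []" and not_ind: "\<not> induced_path E ps"
  obtains ps' where "walk E ps'" "ps' \<noteq> []" "hd ps' = hd ps" "last ps' = last ps"
    "set ps' \<subseteq> set ps" "length ps' < length ps"
proof (cases "distinct ps")
  case False
  then obtain i j where ij: "i < j" "j < length ps" "ps ! i = ps ! j"
    by (metis distinct_conv_nth linorder_neqE_nat)
  show ?thesis
  proof (cases "i = 0")
    case True
    have "hd (drop j ps) = hd ps" using ij True ne by (simp add: hd_drop_conv_nth hd_conv_nth)
    then show ?thesis using ij by (intro that[of "drop j ps"] walk_drop w) (auto dest: in_set_dropD)
  next
    case False
    have "E (ps ! (i - 1)) (ps ! i)" using w ij False unfolding walk_def
      by (metis Suc_pred' bot_nat_0.not_eq_extremum order.strict_trans)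
    then show ?thesis using walk_splice[OF w _ ij(1,2)] False ij(3) that by auto
  qed
next
  case True
  then obtain i j where ij: "i < length ps" "j < length ps" "E (ps ! i) (ps ! j)"
    "j \<noteq> Suc i" "i \<noteq> Suc j"
    using w not_ind unfolding induced_path_def by blast
  have "i \<noteq> j" using ij(3) irr by metis
  then obtain a b where ab: "Suc a < b" "b < length ps" "E (ps ! a) (ps ! b)"
    using ij sym by (metis Suc_lessI linorder_neqE_nat)
  then show ?thesis using walk_splice[OF w _ _ ab(2), of "Suc a"] that by auto
qed

lemma walk_to_induced_path:
  assumes irr: "\<And>a. \<not> E a a" and sym: "\<And>a b. E a b \<Longrightarrow> E b a"
  shows "walk E ps \<Longrightarrow> ps \<noteq> [] \<Longrightarrow> \<exists>qs. induced_path E qs \<and> qs \<noteq> []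
     \<and> hd qs = hd ps \<and> last qs = last ps \<and> set qs \<subseteq> set ps"
proof (induction "length ps" arbitrary: ps rule: less_induct)
  case less
  show ?case
  proof (cases "induced_path E ps")
    case False
    obtain ps' where "walk E ps'" "ps' \<noteq> []" "hd ps' = hd ps" "last ps' = last ps"
      "set ps' \<subseteq> set ps" "length ps' < length ps"
      using walk_shortcut[OF irr sym less(2,3) False] .
    then show ?thesis using less(1) by (metis order.trans)
  qed (use less in blast)
qed

lemma induced_path_length:
  assumes "induced_path E qs" "qs \<noteq> []" "hd qs \<noteq> last qs" "\<not> E (hd qs) (last qs)"
  shows "3 \<le> length qs"
proof (rule ccontr)
  assume "\<not> 3 \<le> length qs"
  then consider a where "qs = [a]" | a b where "qs = [a, b]"
    using assms(2) by (cases qs rule: remdups_adj.cases) (auto simp: Suc_le_eq)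
  then show False using assms unfolding induced_path_def walk_def by cases auto
qed

lemma induced_cycle_close_path:
  assumes irr: "\<And>a. \<not> E a a" and sym: "\<And>a b. E a b \<Longrightarrow> E b a"
    and qs: "induced_path E qs" "qs \<noteq> []" "hd qs \<noteq> last qs" "\<not> E (hd qs) (last qs)"
    and x: "x \<notin> set qs" "E x (hd qs)" "E x (last qs)"
    and x_only_ends: "\<And>u. u \<in> set qs \<Longrightarrow> E x u \<Longrightarrow> u = hd qs \<or> u = last qs"
    and V: "set qs \<subseteq> V" "x \<in> V"
  shows "induced_cycle V E (x # qs)"
proof -
  define n where "n = length qs"
  have n3: "3 \<le> n" unfolding n_def by (rule induced_path_length[OF qs])
  have w: "walk E qs" and d: "distinct qs"
    and chordless: "\<And>i j. i < n \<Longrightarrow> j < n \<Longrightarrow> E (qs!i) (qs!j) \<Longrightarrow> j = Suc i \<or> i = Suc j"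
    using qs(1) unfolding induced_path_def n_def by auto
  have ends: "hd qs = qs ! 0" "last qs = qs ! (n - 1)"
    using qs(2) unfolding n_def by (simp_all add: hd_conv_nth last_conv_nth)
  have x_nbrs: "k = 0 \<or> k = n - 1" if "k < n" "E x (qs ! k)" for k
    using x_only_ends[of "qs ! k"] that n3 qs(2) nth_eq_iff_index_eq[OF d, of k 0]
      nth_eq_iff_index_eq[OF d, of k "n - 1"] unfolding ends n_def by auto
  have len: "length (x # qs) = Suc n" unfolding n_def by simp
  show ?thesis unfolding induced_cycle_def len
  proof (intro conjI allI impI)
    show "4 \<le> Suc n" "distinct (x # qs)" "set (x # qs) \<subseteq> V" using n3 d x V by auto
  next
    fix i assume i: "i < Suc n"
    consider "i = 0" | "i = n" | "0 < i" "i < n" using i by linarith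
    then show "E ((x # qs) ! i) ((x # qs) ! ((i + 1) mod Suc n))"
    proof cases
      case 1 then show ?thesis using x ends n3 by simp
    next
      case 2 then show ?thesis using sym[OF x(3)] ends n3 by (cases n) auto
    next
      case 3 then show ?thesis using w unfolding walk_def n_def
        by (cases i) auto
    qed
  next
    fix i j assume i: "i < Suc n" and j: "j < Suc n" and e: "E ((x # qs) ! i) ((x # qs) ! j)"
    show "j = (i + 1) mod Suc n \<or> i = (j + 1) mod Suc n"
    proof (cases i; cases j)
      fix j' assume "i = 0" "j = Suc j'"
      then show ?thesis using x_nbrs[of j'] e j n3 by auto
    next
      fix i' assume "i = Suc i'" "j = 0"
      then show ?thesis using x_nbrs[of i'] sym[OF e] i n3 by auto
    next
      fix i' j' assume "i = Suc i'" "j = Suc j'"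
      then show ?thesis using chordless[of i' j'] e i j by auto
    qed (use e irr in auto)
  qed
qed

section \<open>Simplicial vertices of chordal graphs\<close>

definition simplicial :: "'a set \<Rightarrow> ('a \<Rightarrow> 'a \<Rightarrow> bool) \<Rightarrow> 'a \<Rightarrow> bool" where
  "simplicial S E v \<longleftrightarrow> v \<in> S \<and> (\<forall>a\<in>S. \<forall>b\<in>S. E v a \<longrightarrow> E v b \<longrightarrow> a \<noteq> b \<longrightarrow> E a b)"

lemma chordal_mono: "chordal S E \<Longrightarrow> T \<subseteq> S \<Longrightarrow> chordal T E"
  unfolding chordal_def induced_cycle_def by blast

lemma simplicial_extend:
  assumes "simplicial T E v" "T \<subseteq> S" "\<And>u. u \<in> S \<Longrightarrow> E v u \<Longrightarrow> u \<in> T"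
  shows "simplicial S E v"
  using assms unfolding simplicial_def by (meson subsetD)

lemma complete_simplicial:
  "v \<in> S \<Longrightarrow> \<forall>a\<in>S. \<forall>b\<in>S. a \<noteq> b \<longrightarrow> E a b \<Longrightarrow> simplicial S E v"
  unfolding simplicial_def by simp

lemma rtranclp_walk:
  assumes "(\<lambda>a b. E a b \<and> a \<in> W \<and> b \<in> W)\<^sup>*\<^sup>* a b" "a \<in> W"
  shows "\<exists>ps. walk E ps \<and> ps \<noteq> [] \<and> hd ps = a \<and> last ps = b \<and> set ps \<subseteq> W"
  using assms
proof (induction rule: rtranclp_induct)
  case base
  then show ?case by (intro exI[of _ "[a]"]) (auto simp: walk_def)
next
  case (step b c)
  then obtain ps where ps: "walk E ps" "ps \<noteq> []" "hd ps = a" "last ps = b" "set ps \<subseteq> W" by blast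
  then have "walk E (ps @ [c])" using step(2) by (intro walk_snoc) auto
  then show ?case using ps step(2) by (intro exI[of _ "ps @ [c]"]) auto
qed

text \<open>The key consequence of chordality: two neighbours s, t of x that are joined
  by a walk avoiding x and all its other neighbours must be adjacent, since
  otherwise a shortest such connection closes an induced cycle through x.\<close>
lemma chordal_neighbours_adjacent:
  assumes irr: "\<And>a. \<not> E a a" and sym: "\<And>a b. E a b \<Longrightarrow> E b a"
    and chordal: "chordal S E" and x: "x \<in> S" "E x s" "E x t" and st: "s \<in> S" "t \<in> S" "s \<noteq> t"
    and p: "walk E p" "p \<noteq> []" "E s (hd p)" "E (last p) t" "set p \<subseteq> S"
    and p_avoids: "\<And>u. u \<in> set p \<Longrightarrow> u \<noteq> x \<and> \<not> E x u"
  shows "E s t"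
proof (rule ccontr)
  assume nst: "\<not> E s t"
  define ps where "ps = s # p @ [t]"
  have w: "walk E ps" unfolding ps_def using p by (intro walk_Cons walk_snoc) auto
  have ends: "ps \<noteq> []" "hd ps = s" "last ps = t" by (simp_all add: ps_def)
  obtain qs where qs: "induced_path E qs" "qs \<noteq> []" "hd qs = s" "last qs = t"
    "set qs \<subseteq> set ps"
    using walk_to_induced_path[OF irr sym w ends(1)] unfolding ends(2,3) by blast
  have ps_set: "set ps = {s, t} \<union> set p" unfolding ps_def by auto
  have "x \<noteq> s" "x \<noteq> t" using x irr by auto
  have "induced_cycle S E (x # qs)"
  proof (rule induced_cycle_close_path[OF irr sym qs(1,2)])
    show "x \<notin> set qs" using qs(5) p_avoids \<open>x \<noteq> s\<close> \<open>x \<noteq> t\<close> unfolding ps_set by blast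
    show "\<And>u. u \<in> set qs \<Longrightarrow> E x u \<Longrightarrow> u = hd qs \<or> u = last qs"
      using qs(3-5) p_avoids unfolding ps_set by blast
    show "set qs \<subseteq> S" using qs(5) p(5) st unfolding ps_set by blast
  qed (use qs(3,4) x st nst in simp_all)
  then show False using chordal unfolding chordal_def by blast
qed

text \<open>The separator behind Dirac's lemma.  Given a non-neighbour w of x, let C be
  the component of w in the graph with x and its neighbours removed, and N the set
  of neighbours of x adjacent to C.\<close>
lemma chordal_component_separator:
  assumes irr: "\<And>a. \<not> E a a" and sym: "\<And>a b. E a b \<Longrightarrow> E b a"
    and chordal: "chordal S E" and x: "x \<in> S" and w: "w \<in> S" "w \<noteq> x" "\<not> E x w"
  obtains C N where "w \<in> C" "C \<subseteq> S" "N \<subseteq> S"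
    "\<And>c. c \<in> C \<Longrightarrow> c \<noteq> x \<and> \<not> E x c" "\<And>s. s \<in> N \<Longrightarrow> E x s"
    "\<And>s t. s \<in> N \<Longrightarrow> t \<in> N \<Longrightarrow> s \<noteq> t \<Longrightarrow> E s t"
    "\<And>c u. c \<in> C \<Longrightarrow> u \<in> S \<Longrightarrow> E c u \<Longrightarrow> u \<in> C \<union> N"
proof -
  define W where "W = {u\<in>S. u \<noteq> x \<and> \<not> E x u}"
  define R where "R = (\<lambda>a b. E a b \<and> a \<in> W \<and> b \<in> W)"
  define C where "C = {u. R\<^sup>*\<^sup>* w u}"
  define N where "N = {s\<in>S. E x s \<and> (\<exists>c\<in>C. E s c)}"
  have wW: "w \<in> W" using w unfolding W_def by auto
  have CW: "C \<subseteq> W"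
  proof
    fix u assume "u \<in> C"
    then have "R\<^sup>*\<^sup>* w u" unfolding C_def by simp
    then show "u \<in> W" using wW by (cases rule: rtranclp.cases) (auto simp: R_def)
  qed
  have C_connected: "R\<^sup>*\<^sup>* a b" if "a \<in> C" "b \<in> C" for a b
  proof -
    have "symp R" unfolding R_def symp_def using sym by blast
    moreover have "R\<^sup>*\<^sup>* w a" "R\<^sup>*\<^sup>* w b" using that unfolding C_def by auto
    ultimately show ?thesis by (meson rtranclp_trans sympD symp_rtranclp)
  qed
  have N_clique: "E s t" if st: "s \<in> N" "t \<in> N" "s \<noteq> t" for s t
  proof -
    obtain cs ct where c: "cs \<in> C" "ct \<in> C" "E s cs" "E t ct" using st unfolding N_def by blast
    obtain p where p: "walk E p" "p \<noteq> []" "hd p = cs" "last p = ct" "set p \<subseteq> W"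
      using rtranclp_walk[of E W cs ct] C_connected[OF c(1,2)] c(1) CW unfolding R_def by blast
    show ?thesis
    proof (rule chordal_neighbours_adjacent[OF irr sym chordal x _ _ _ _ st(3)])
      show "walk E p" "p \<noteq> []" "E s (hd p)" "E (last p) t" using p c(3) sym[OF c(4)] by auto
      show "set p \<subseteq> S" "\<And>u. u \<in> set p \<Longrightarrow> u \<noteq> x \<and> \<not> E x u"
        using p(5) unfolding W_def by auto
    qed (use st in \<open>auto simp: N_def\<close>)
  qed
  have C_nbrs: "u \<in> C \<union> N" if "c \<in> C" "u \<in> S" "E c u" for c u
  proof (cases "E x u")
    case True
    then show ?thesis using that sym[OF that(3)] unfolding N_def by blast
  next
    case False
    have "u \<noteq> x" using that CW sym[of c u] unfolding W_def by blast
    then have "R c u" using that False CW unfolding R_def W_def by auto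
    then show ?thesis using that(1) unfolding C_def by (auto intro: rtranclp.rtrancl_into_rtrancl)
  qed
  show thesis
  proof (rule that[OF _ _ _ _ _ N_clique C_nbrs])
    show "w \<in> C" unfolding C_def by simp
  qed (use CW in \<open>auto simp: W_def N_def\<close>)
qed

lemma simplicial_join_clique:
  assumes sym: "\<And>a b. E a b \<Longrightarrow> E b a" and v: "simplicial C E v"
    and N_clique: "\<And>s t. s \<in> N \<Longrightarrow> t \<in> N \<Longrightarrow> s \<noteq> t \<Longrightarrow> E s t"
    and N_to_C: "\<And>s c. s \<in> N \<Longrightarrow> c \<in> C \<Longrightarrow> E s c"
  shows "simplicial (C \<union> N) E v"
  unfolding simplicial_def
proof (intro conjI ballI impI)
  show "v \<in> C \<union> N" using v unfolding simplicial_def by blast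
next
  fix a b assume ab: "a \<in> C \<union> N" "b \<in> C \<union> N" "E v a" "E v b" "a \<noteq> b"
  then consider "a \<in> C" "b \<in> C" | "a \<in> N" "b \<in> N" | "a \<in> C" "b \<in> N" | "a \<in> N" "b \<in> C"
    by blast
  then show "E a b"
  proof cases
    case 1 then show ?thesis using v ab unfolding simplicial_def by blast
  next
    case 2 then show ?thesis using N_clique ab by blast
  next
    case 3 then show ?thesis using sym[OF N_to_C] by blast
  next
    case 4 then show ?thesis using N_to_C by blast
  qed
qed

text \<open>Dirac's lemma, in the strengthened form needed for the induction: if x has a
  non-neighbour w in a chordal graph, then some simplicial vertex lies outside the
  closed neighbourhood of x.  With C and N as in the separator lemma, a simplicial
  vertex of C \<union> N (found by induction) that lies in C is simplicial in the whole
  graph, because all its neighbours lie in C \<union> N.\<close>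
lemma chordal_simplicial_avoiding:
  assumes irr: "\<And>a. \<not> E a a" and sym: "\<And>a b. E a b \<Longrightarrow> E b a"
  shows "finite S \<Longrightarrow> chordal S E \<Longrightarrow> x \<in> S \<Longrightarrow> w \<in> S \<Longrightarrow> w \<noteq> x \<Longrightarrow> \<not> E x w \<Longrightarrow>
         \<exists>v. simplicial S E v \<and> v \<noteq> x \<and> \<not> E x v"
proof (induction S arbitrary: x w rule: finite_psubset_induct)
  case (psubset S)
  obtain C N where wC: "w \<in> C" and CS: "C \<subseteq> S" and NS: "N \<subseteq> S"
    and C_far: "\<And>c. c \<in> C \<Longrightarrow> c \<noteq> x \<and> \<not> E x c" and N_near: "\<And>s. s \<in> N \<Longrightarrow> E x s"
    and N_clique: "\<And>s t. s \<in> N \<Longrightarrow> t \<in> N \<Longrightarrow> s \<noteq> t \<Longrightarrow> E s t"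
    and C_nbrs: "\<And>c u. c \<in> C \<Longrightarrow> u \<in> S \<Longrightarrow> E c u \<Longrightarrow> u \<in> C \<union> N"
    using chordal_component_separator[OF irr sym psubset(3-7)] by blast
  define H where "H = C \<union> N"
  have "x \<notin> H" using C_far N_near irr unfolding H_def by blast
  then have H_proper: "H \<subset> S" using CS NS psubset(4) unfolding H_def by blast
  then have H_chordal: "chordal H E" using chordal_mono[OF psubset(3)] by blast
  (* Either some s in N misses a vertex of C, and the induction hypothesis for H
     and s yields a simplicial vertex of H outside the clique N, or N is complete
     to C, and any simplicial vertex of C is simplicial in H. *)
  obtain v where vC: "v \<in> C" and vH: "simplicial H E v"
  proof (cases "\<exists>s\<in>N. \<exists>c\<in>C. \<not> E s c")
    case True
    then obtain s c where sc: "s \<in> N" "c \<in> C" "\<not> E s c" by blast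
    have "c \<noteq> s" "s \<in> H" "c \<in> H" using sc C_far N_near unfolding H_def by auto
    then obtain v where v: "simplicial H E v" "v \<noteq> s" "\<not> E s v"
      using psubset(2)[OF H_proper H_chordal] sc(3) by blast
    have "v \<in> C" using v N_clique[OF sc(1)] unfolding simplicial_def H_def by blast
    then show ?thesis using that v(1) by blast
  next
    case False
    then have N_to_C: "\<And>s c. s \<in> N \<Longrightarrow> c \<in> C \<Longrightarrow> E s c" by blast
    obtain v where v: "simplicial C E v"
    proof (cases "\<exists>a\<in>C. \<exists>b\<in>C. a \<noteq> b \<and> \<not> E a b")
      case True
      then obtain a b where ab: "a \<in> C" "b \<in> C" "b \<noteq> a" "\<not> E a b" by blast
      have "C \<subset> S" using H_proper unfolding H_def by blast
      moreover have "chordal C E" using chordal_mono[OF psubset(3) CS] .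
      ultimately show ?thesis using psubset(2)[OF _ _ ab] that by blast
    next
      case False
      then have "\<forall>a\<in>C. \<forall>b\<in>C. a \<noteq> b \<longrightarrow> E a b" by blast
      then show ?thesis using that complete_simplicial[OF wC] by metis
    qed
    have "v \<in> C" using v unfolding simplicial_def by blast
    moreover have "simplicial H E v"
      unfolding H_def using simplicial_join_clique[OF sym v N_clique N_to_C] .
    ultimately show ?thesis using that by blast
  qed
  have "simplicial S E v"
    by (rule simplicial_extend[OF vH]) (use H_proper C_nbrs[OF vC] in \<open>auto simp: H_def\<close>)
  then show ?case using C_far[OF vC] by blast
qed

lemma chordal_simplicial_exists:
  assumes irr: "\<And>a. \<not> E a a" and sym: "\<And>a b. E a b \<Longrightarrow> E b a"
    and S: "finite S" "chordal S E" "S \<noteq> {}"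
  obtains v where "simplicial S E v"
proof (cases "\<exists>a\<in>S. \<exists>b\<in>S. a \<noteq> b \<and> \<not> E a b")
  case True
  then obtain a b where ab: "a \<in> S" "b \<in> S" "b \<noteq> a" "\<not> E a b" by blast
  show ?thesis
    using chordal_simplicial_avoiding[OF irr sym S(1,2) ab] that by blast
next
  case False
  then have "\<forall>a\<in>S. \<forall>b\<in>S. a \<noteq> b \<longrightarrow> E a b" by blast
  moreover obtain v where "v \<in> S" using S(3) by blast
  ultimately show ?thesis using that complete_simplicial by metis
qed

section \<open>Alternating tail sums over power sets\<close>

definition alt_tail :: "'a set \<Rightarrow> nat \<Rightarrow> real" where
  "alt_tail N m = (\<Sum>J\<in>Pow N. if m \<le> card J then (-1) ^ card J else 0)"

lemma sum_Pow_insert: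
  assumes "finite N" "a \<notin> N"
  shows "(\<Sum>J\<in>Pow (insert a N). f J) = (\<Sum>J\<in>Pow N. f J) + (\<Sum>J\<in>Pow N. f (insert a J))"
proof -
  have inj: "inj_on (insert a) (Pow N)"
    using assms(2) unfolding inj_on_def by (metis PowD insert_ident subsetD)
  have disj: "Pow N \<inter> insert a ` Pow N = {}" using assms(2) by auto
  have "(\<Sum>J\<in>Pow (insert a N). f J) = (\<Sum>J\<in>Pow N. f J) + (\<Sum>J\<in>insert a ` Pow N. f J)"
    unfolding Pow_insert using assms(1) disj by (intro sum.union_disjoint) auto
  also have "(\<Sum>J\<in>insert a ` Pow N. f J) = (\<Sum>J\<in>Pow N. f (insert a J))"
    using sum.reindex[OF inj] by simp
  finally show ?thesis .
qed

lemma alt_tail_insert: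
  assumes "finite N" "a \<notin> N"
  shows "alt_tail (insert a N) m = alt_tail N m - alt_tail N (m - 1)"
proof -
  have "(\<Sum>J\<in>Pow N. if m \<le> card (insert a J) then (-1::real) ^ card (insert a J) else 0)
      = (\<Sum>J\<in>Pow N. - (if m - 1 \<le> card J then (-1) ^ card J else 0))"
  proof (rule sum.cong[OF refl])
    fix J assume "J \<in> Pow N"
    then have "card (insert a J) = Suc (card J)"
      using assms finite_subset by (metis PowD card_insert_disjoint subsetD)
    then show "(if m \<le> card (insert a J) then (-1::real) ^ card (insert a J) else 0)
      = - (if m - 1 \<le> card J then (-1) ^ card J else 0)" by auto
  qed
  then show ?thesis
    unfolding alt_tail_def sum_Pow_insert[OF assms] by (simp add: sum_negf)
qed

lemma alt_tail_sign: "finite N \<Longrightarrow> 0 \<le> (-1::real) ^ m * alt_tail N m"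
proof (induction N arbitrary: m rule: finite_induct)
  case empty
  then show ?case by (cases m) (simp_all add: alt_tail_def)
next
  case (insert a N)
  show ?case
  proof (cases m)
    case 0 then show ?thesis using alt_tail_insert[OF insert(1,2)] by simp
  next
    case (Suc k)
    have "(-1::real) ^ m * alt_tail (insert a N) m = (-1) ^ m * alt_tail N m + (-1) ^ k * alt_tail N k"
      unfolding alt_tail_insert[OF insert(1,2)] Suc by (simp add: algebra_simps)
    then show ?thesis using insert(3)[of m] insert(3)[of k] by simp
  qed
qed

section \<open>The signed count of large cliques\<close>

lemma clique_complex_finite: "finite S \<Longrightarrow> finite (clique_complex S E)"
  unfolding clique_complex_def by (rule finite_subset[of _ "Pow S"]) auto

lemma clique_complex_simplicial_split:
  assumes sym: "\<And>a b. E a b \<Longrightarrow> E b a" and v: "simplicial S E v"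
  shows "clique_complex S E = clique_complex (S - {v}) E \<union> insert v ` Pow {u\<in>S. E v u}"
proof (intro equalityI subsetI)
  fix I assume I: "I \<in> clique_complex S E"
  show "I \<in> clique_complex (S - {v}) E \<union> insert v ` Pow {u\<in>S. E v u}"
  proof (cases "v \<in> I")
    case True
    then have "I = insert v (I - {v})" by blast
    moreover have "I - {v} \<in> Pow {u\<in>S. E v u}" using I True unfolding clique_complex_def by auto
    ultimately show ?thesis by blast
  next
    case False then show ?thesis using I unfolding clique_complex_def by auto
  qed
next
  fix I assume "I \<in> clique_complex (S - {v}) E \<union> insert v ` Pow {u\<in>S. E v u}"
  then consider "I \<in> clique_complex (S - {v}) E" | J where "J \<subseteq> {u\<in>S. E v u}" "I = insert v J"
    by blast
  then show "I \<in> clique_complex S E"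
  proof cases
    case 1 then show ?thesis unfolding clique_complex_def by auto
  next
    case 2
    have "v \<in> S" and nbrs_clique: "\<And>a b. a \<in> J \<Longrightarrow> b \<in> J \<Longrightarrow> a \<noteq> b \<Longrightarrow> E a b"
      using v 2(1) unfolding simplicial_def by blast+
    then show ?thesis using 2 sym unfolding clique_complex_def by auto
  qed
qed

definition large_clique_sum :: "'a set \<Rightarrow> ('a \<Rightarrow> 'a \<Rightarrow> bool) \<Rightarrow> nat \<Rightarrow> real" where
  "large_clique_sum S E m =
     (\<Sum>I\<in>clique_complex S E. if m < card I then (-1) ^ (card I - 1) else 0)"

lemma large_clique_sum_remove_simplicial:
  assumes irr: "\<And>a. \<not> E a a" and sym: "\<And>a b. E a b \<Longrightarrow> E b a"
    and S: "finite S" and v: "simplicial S E v"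
  shows "large_clique_sum S E m = large_clique_sum (S - {v}) E m + alt_tail {u\<in>S. E v u} m"
proof -
  define N where "N = {u\<in>S. E v u}"
  let ?t = "\<lambda>I. if m < card I then (-1::real) ^ (card I - 1) else 0"
  have fN: "finite N" using S unfolding N_def by simp
  have vN: "v \<notin> N" using irr unfolding N_def by blast
  have inj: "inj_on (insert v) (Pow N)"
    using vN unfolding inj_on_def by (metis PowD insert_ident subsetD)
  have disj: "clique_complex (S - {v}) E \<inter> insert v ` Pow N = {}"
    unfolding clique_complex_def by auto
  have split: "clique_complex S E = clique_complex (S - {v}) E \<union> insert v ` Pow N"
    unfolding N_def by (rule clique_complex_simplicial_split[OF sym v])
  have "large_clique_sum S E m = (\<Sum>I\<in>clique_complex (S - {v}) E. ?t I) + (\<Sum>I\<in>insert v ` Pow N. ?t I)"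
    unfolding large_clique_sum_def split
    using disj fN S by (intro sum.union_disjoint) (auto intro: clique_complex_finite)
  also have "(\<Sum>I\<in>insert v ` Pow N. ?t I) = (\<Sum>J\<in>Pow N. ?t (insert v J))"
    using sum.reindex[OF inj] by simp
  also have "\<dots> = alt_tail N m" unfolding alt_tail_def
  proof (rule sum.cong[OF refl])
    fix J assume "J \<in> Pow N"
    then have "card (insert v J) = Suc (card J)"
      using fN vN finite_subset by (metis PowD card_insert_disjoint subsetD)
    then show "?t (insert v J) = (if m \<le> card J then (-1) ^ card J else 0)" by auto
  qed
  finally show ?thesis unfolding large_clique_sum_def N_def .
qed

lemma large_clique_sum_nonneg:
  assumes irr: "\<And>a. \<not> E a a" and sym: "\<And>a b. E a b \<Longrightarrow> E b a"
  shows "finite S \<Longrightarrow> chordal S E \<Longrightarrow> 0 \<le> large_clique_sum S E (2 * r)"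
proof (induction S rule: finite_psubset_induct)
  case (psubset S)
  show ?case
  proof (cases "S = {}")
    case True
    then show ?thesis by (simp add: large_clique_sum_def clique_complex_def)
  next
    case False
    obtain v where v: "simplicial S E v"
      using chordal_simplicial_exists[OF irr sym psubset(1,3) False] .
    then have "S - {v} \<subset> S" unfolding simplicial_def by blast
    then have "0 \<le> large_clique_sum (S - {v}) E (2 * r)"
      using psubset(2)[OF _ chordal_mono[OF psubset(3)]] by blast
    moreover have "0 \<le> alt_tail {u\<in>S. E v u} (2 * r)"
      using alt_tail_sign[of "{u\<in>S. E v u}" "2 * r"] psubset(1) by simp
    ultimately show ?thesis
      using large_clique_sum_remove_simplicial[OF irr sym psubset(1) v, of "2 * r"] by linarith
  qed
qed

lemma large_clique_sum_indicator:
  assumes "finite V"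
  shows "(\<Sum>I\<in>clique_complex V E.
            (if m < card I then (-1) ^ (card I - 1) else 0) * indicator (\<Inter>i\<in>I. A i) \<omega>)
       = large_clique_sum {v\<in>V. \<omega> \<in> A v} E m"
proof -
  let ?t = "\<lambda>I. if m < card I then (-1::real) ^ (card I - 1) else 0"
  have "clique_complex {v\<in>V. \<omega> \<in> A v} E = {I\<in>clique_complex V E. \<forall>i\<in>I. \<omega> \<in> A i}"
    unfolding clique_complex_def by auto
  then have "large_clique_sum {v\<in>V. \<omega> \<in> A v} E m
      = (\<Sum>I\<in>clique_complex V E. if \<forall>i\<in>I. \<omega> \<in> A i then ?t I else 0)"
    unfolding large_clique_sum_def
    using sum.inter_filter[OF clique_complex_finite[OF assms]] by simp
  then show ?thesis by (auto simp: indicator_def intro!: sum.cong)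
qed

text \<open>A linear combination of measures of events is non-negative as soon as the same
  combination of their indicator functions is non-negative everywhere: it is the
  integral of that combination.\<close>
lemma measure_combination_nonneg:
  fixes c :: "'i \<Rightarrow> real" and B :: "'i \<Rightarrow> 'x set"
  assumes "finite_measure M" and "finite X" and B: "\<And>I. I \<in> X \<Longrightarrow> B I \<in> sets M"
    and pointwise: "\<And>\<omega>. \<omega> \<in> space M \<Longrightarrow> 0 \<le> (\<Sum>I\<in>X. c I * indicator (B I) \<omega>)"
  shows "0 \<le> (\<Sum>I\<in>X. c I * measure M (B I))"
proof -
  interpret finite_measure M by fact
  have integrable: "integrable M (\<lambda>\<omega>. c I * indicator (B I) \<omega>)" if "I \<in> X" for I
    using B[OF that] by (intro integrable_mult_right integrable_real_indicator) (simp_all add: less_top[symmetric])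
  have "(\<Sum>I\<in>X. c I * measure M (B I)) = (\<Sum>I\<in>X. LINT \<omega>|M. c I * indicator (B I) \<omega>)"
    using B sets.Int_space_eq2 by (intro sum.cong) simp_all
  also have "\<dots> = (LINT \<omega>|M. (\<Sum>I\<in>X. c I * indicator (B I) \<omega>))"
    using Bochner_Integration.integral_sum[where I=X and f="\<lambda>I \<omega>. c I * indicator (B I) \<omega>"] integrable by simp
  also have "\<dots> \<ge> 0"
    using pointwise by (intro integral_nonneg_AE AE_I2) simp
  finally show ?thesis .
qed

theorem theorem2:
  fixes V :: "'a set" and E :: "'a \<Rightarrow> 'a \<Rightarrow> bool"
    and M :: "'b measure" and A :: "'a \<Rightarrow> 'b set" and r :: nat
  assumes "simple_graph V E" and "V \<noteq> {}" and "chordal V E"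
    and "prob_space M" and "\<And>v. v \<in> V \<Longrightarrow> A v \<in> sets M"
    and "r \<ge> 1"
  shows "(\<Sum>I\<in>clique_complex V E. (-1::real) ^ (card I - 1) * measure M (\<Inter>i\<in>I. A i))
     \<ge> (\<Sum>I\<in>{I\<in>clique_complex V E. card I \<le> 2 * r}.
           (-1::real) ^ (card I - 1) * measure M (\<Inter>i\<in>I. A i))"
proof -
  have fV: "finite V" and irr: "\<And>a. \<not> E a a" and sym: "\<And>a b. E a b \<Longrightarrow> E b a"
    using assms(1) unfolding simple_graph_def by auto
  define X where "X = clique_complex V E"
  define c :: "'a set \<Rightarrow> real" where "c I = (if 2 * r < card I then (-1) ^ (card I - 1) else 0)" for I
  have fX: "finite X" unfolding X_def using clique_complex_finite[OF fV] .
  have events: "(\<Inter>i\<in>I. A i) \<in> sets M" if "I \<in> X" for I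
    using that fV assms(5) unfolding X_def clique_complex_def
    by (intro sets.finite_INT) (auto intro: finite_subset)
  have "0 \<le> (\<Sum>I\<in>X. c I * measure M (\<Inter>i\<in>I. A i))"
  proof (rule measure_combination_nonneg[OF _ fX events])
    show "finite_measure M" using assms(4) by (rule prob_space.finite_measure)
    fix \<omega>
    have S: "{v\<in>V. \<omega> \<in> A v} \<subseteq> V" by blast
    show "0 \<le> (\<Sum>I\<in>X. c I * indicator (\<Inter>i\<in>I. A i) \<omega>)"
      unfolding X_def c_def large_clique_sum_indicator[OF fV]
      by (rule large_clique_sum_nonneg[OF irr sym finite_subset[OF S fV] chordal_mono[OF assms(3) S]])
  qed
  moreover have "(\<Sum>I\<in>X. (-1::real) ^ (card I - 1) * measure M (\<Inter>i\<in>I. A i))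
      = (\<Sum>I\<in>{I\<in>X. card I \<le> 2 * r}. (-1) ^ (card I - 1) * measure M (\<Inter>i\<in>I. A i))
        + (\<Sum>I\<in>X. c I * measure M (\<Inter>i\<in>I. A i))"
    unfolding sum.inter_filter[OF fX] sum.distrib[symmetric] c_def by (intro sum.cong) auto
  ultimately show ?thesis unfolding X_def by linarith
qed
end
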